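(* Let $i\geq1$ and let $\tau$ be an SSRCT of shape $\alpha$ such that the partition $\widetilde\alpha$ has an addable node in column $i+1$. Then $\phi_{i+1}(\tau)$ has shape $\mathfrak{d}_i(\alpha)$.
   Context: Compositions (positive parts) are drawn as reverse composition diagrams: row $r$ from the top has $\alpha_r$ left-justified boxes; $\widetilde\alpha$ is the partition obtained by sorting the parts of $\alpha$ decreasingly; an addable node of a partition is a position whose addition gives a partition. An SSRCT of shape $\alpha$ is a filling by positive integers with rows weakly decreasing left to right, first column strictly increasing top to bottom, and: for rows $r<s$ and column $c$ with $(s,c+1)\in\alpha$, if $(r,c)\in\alpha$ and $\tau(r,c)\geq\tau(s,c+1)$ then $(r,c+1)\in\alpha$ and $\tau(r,c+1)>\tau(s,c+1)$. $\mathfrak{d}_i(\alpha)$ is obtained by subtracting $1$ from the rightmost part of $\alpha$ equal to $i$ and omitting a resulting $0$. $\phi_{i+1}$: set $\tau(r,c)=0$ outside $\alpha$; let $r_1$ be the largest index with $\alpha_{r_1}=i$, and for $j\geq2$ let $r_j$ be the largest $r<r_{j-1}$ with $\tau(r,i)>\tau(r_{j-1},i)\geq\tau(r,i+1)$, ending at $r_k$. $\phi_{i+1}(\tau)$ is obtained by placing, for $j=k,\ldots,2$, the original entry $\tau(r_{j-1},i)$ into box $(r_j,i)$ and deleting box $(r_1,i)$ (deleting the row if it becomes empty). *)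

theory Defs
  imports Main
begin

(* Conventions: a composition / partition is a list of naturals; rows and columns are
   indexed from 1; row r (from the top) of alpha has  alpha ! (r - 1)  boxes. *)

definition is_composition :: "nat list \<Rightarrow> bool" where
  "is_composition \<alpha> \<longleftrightarrow> (\<forall>p\<in>set \<alpha>. 0 < p)"

definition diagram :: "nat list \<Rightarrow> (nat \<times> nat) set" where
  "diagram \<alpha> = {(r, c). 1 \<le> r \<and> r \<le> length \<alpha> \<and> 1 \<le> c \<and> c \<le> \<alpha> ! (r - 1)}"

definition sort_dec :: "nat list \<Rightarrow> nat list" where
  "sort_dec \<alpha> = rev (sort \<alpha>)"

definition is_partition_shape :: "(nat \<times> nat) set \<Rightarrow> bool" where
  "is_partition_shape S \<longleftrightarrow> finite S \<and>
     (\<forall>(r, c)\<in>S. 1 \<le> r \<and> 1 \<le> c \<and>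
        (1 < r \<longrightarrow> (r - 1, c) \<in> S) \<and> (1 < c \<longrightarrow> (r, c - 1) \<in> S))"

definition addable :: "nat list \<Rightarrow> nat \<times> nat \<Rightarrow> bool" where
  "addable la x \<longleftrightarrow> x \<notin> diagram la \<and> is_partition_shape (insert x (diagram la))"

(* semistandard reverse composition tableau of shape alpha (entries outside alpha irrelevant) *)
definition ssrct :: "nat list \<Rightarrow> (nat \<Rightarrow> nat \<Rightarrow> nat) \<Rightarrow> bool" where
  "ssrct \<alpha> \<tau> \<longleftrightarrow> is_composition \<alpha> \<and>
     (\<forall>(r, c)\<in>diagram \<alpha>. 0 < \<tau> r c) \<and>
     (\<forall>r c. (r, c + 1) \<in> diagram \<alpha> \<longrightarrow> \<tau> r c \<ge> \<tau> r (c + 1)) \<and>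
     (\<forall>r s. r < s \<longrightarrow> (r, 1) \<in> diagram \<alpha> \<longrightarrow> (s, 1) \<in> diagram \<alpha> \<longrightarrow> \<tau> r 1 < \<tau> s 1) \<and>
     (\<forall>r s c. r < s \<longrightarrow> (s, c + 1) \<in> diagram \<alpha> \<longrightarrow> (r, c) \<in> diagram \<alpha> \<longrightarrow>
        \<tau> r c \<ge> \<tau> s (c + 1) \<longrightarrow>
        ((r, c + 1) \<in> diagram \<alpha> \<and> \<tau> r (c + 1) > \<tau> s (c + 1)))"

definition ext0 :: "nat list \<Rightarrow> (nat \<Rightarrow> nat \<Rightarrow> nat) \<Rightarrow> nat \<Rightarrow> nat \<Rightarrow> nat" where
  "ext0 \<alpha> \<tau> r c = (if (r, c) \<in> diagram \<alpha> then \<tau> r c else 0)"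

definition last_row :: "nat list \<Rightarrow> nat \<Rightarrow> nat" where
  "last_row \<alpha> i = (GREATEST r. 1 \<le> r \<and> r \<le> length \<alpha> \<and> \<alpha> ! (r - 1) = i)"

definition next_row :: "nat list \<Rightarrow> (nat \<Rightarrow> nat \<Rightarrow> nat) \<Rightarrow> nat \<Rightarrow> nat \<Rightarrow> nat" where
  "next_row \<alpha> \<tau> i r =
     (let P = (\<lambda>r'. 1 \<le> r' \<and> r' < r \<and>
                  ext0 \<alpha> \<tau> r' i > ext0 \<alpha> \<tau> r i \<and> ext0 \<alpha> \<tau> r i \<ge> ext0 \<alpha> \<tau> r' (i + 1))
      in if \<exists>r'. P r' then (GREATEST r'. P r') else 0)"

(* the sequence r, next, next, ... until it stops (fuel n suffices since rows decrease) *)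
primrec chain_aux :: "nat list \<Rightarrow> (nat \<Rightarrow> nat \<Rightarrow> nat) \<Rightarrow> nat \<Rightarrow> nat \<Rightarrow> nat \<Rightarrow> nat list" where
  "chain_aux \<alpha> \<tau> i 0 r = [r]"
| "chain_aux \<alpha> \<tau> i (Suc n) r =
     (let r' = next_row \<alpha> \<tau> i r in if r' = 0 then [r] else r # chain_aux \<alpha> \<tau> i n r')"

definition phi_chain :: "nat list \<Rightarrow> (nat \<Rightarrow> nat \<Rightarrow> nat) \<Rightarrow> nat \<Rightarrow> nat list" where
  "phi_chain \<alpha> \<tau> i = chain_aux \<alpha> \<tau> i (last_row \<alpha> i) (last_row \<alpha> i)"

definition tab_map :: "nat list \<Rightarrow> (nat \<Rightarrow> nat \<Rightarrow> nat) \<Rightarrow> (nat \<times> nat) \<Rightarrow> nat option" where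
  "tab_map \<alpha> \<tau> x = (if x \<in> diagram \<alpha> then Some (\<tau> (fst x) (snd x)) else None)"

(* phi_{i+1}: for j = k, ..., 2 place tau(r_{j-1}, i) into box (r_j, i); delete box (r_1, i);
   delete row r_1 (shifting the rows below up) if it becomes empty *)
definition phi :: "nat \<Rightarrow> nat list \<Rightarrow> (nat \<Rightarrow> nat \<Rightarrow> nat) \<Rightarrow> (nat \<times> nat) \<Rightarrow> nat option" where
  "phi i \<alpha> \<tau> =
     (let rs = phi_chain \<alpha> \<tau> i; r1 = hd rs;
          M1 = fold (\<lambda>(a, b) M. M((a, i) \<mapsto> ext0 \<alpha> \<tau> b i)) (rev (zip (tl rs) rs)) (tab_map \<alpha> \<tau>);
          M2 = M1((r1, i) := None)
      in if (\<exists>c. M2 (r1, c) \<noteq> None) then M2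
         else (\<lambda>(r, c). if r < r1 then M2 (r, c) else M2 (r + 1, c)))"

definition d_op :: "nat \<Rightarrow> nat list \<Rightarrow> nat list" where
  "d_op i \<alpha> =
     (if \<exists>r. 1 \<le> r \<and> r \<le> length \<alpha> \<and> \<alpha> ! (r - 1) = i then
        (let r = last_row \<alpha> i in
          if \<alpha> ! (r - 1) - 1 = 0 then take (r - 1) \<alpha> @ drop r \<alpha>
          else \<alpha>[r - 1 := \<alpha> ! (r - 1) - 1])
      else \<alpha>)"

end

theory Submission
  imports Defs
begin

text \<open>
  The sliding chain of \<open>\<phi>\<close> only moves entries into boxes of column \<open>i\<close> that are
  already occupied: every row after \<open>r\<^sub>1\<close> is chosen with a positive (extended) entry in
  column \<open>i\<close>, and entries outside the shape are \<open>0\<close>. Hence the set of boxes only loses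
  \<open>(r\<^sub>1, i)\<close>, the last box of the last row of length \<open>i\<close>, and when \<open>i = 1\<close> that row
  disappears. An addable node in column \<open>i + 1\<close> of the sorted partition sits in a row of
  length \<open>i\<close>, which guarantees that \<open>r\<^sub>1\<close> exists.
\<close>

lemma ext0_pos_imp_in_diagram: "0 < ext0 \<alpha> \<tau> r c \<Longrightarrow> (r, c) \<in> diagram \<alpha>"
  by (auto simp: ext0_def split: if_splits)

lemma next_row_ext0_pos:
  assumes "next_row \<alpha> \<tau> i r \<noteq> 0"
  shows "0 < ext0 \<alpha> \<tau> (next_row \<alpha> \<tau> i r) i"
proof -
  define P where "P r' \<longleftrightarrow> 1 \<le> r' \<and> r' < r \<and> ext0 \<alpha> \<tau> r' i > ext0 \<alpha> \<tau> r i
    \<and> ext0 \<alpha> \<tau> r i \<ge> ext0 \<alpha> \<tau> r' (i + 1)" for r'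
  have "next_row \<alpha> \<tau> i r = (if \<exists>r'. P r' then Greatest P else 0)"
    unfolding next_row_def P_def Let_def ..
  with assms have "\<exists>r'. P r'" and "next_row \<alpha> \<tau> i r = Greatest P"
    by (auto split: if_splits)
  moreover have "P (Greatest P)"
    using \<open>\<exists>r'. P r'\<close> by (rule GreatestI_ex_nat[where b = r]) (simp add: P_def)
  ultimately show ?thesis
    by (simp add: P_def)
qed

lemma hd_chain_aux [simp]: "hd (chain_aux \<alpha> \<tau> i n r) = r"
  by (cases n) (auto simp: Let_def)

lemma chain_aux_neq_Nil [simp]: "chain_aux \<alpha> \<tau> i n r \<noteq> []"
  by (cases n) (auto simp: Let_def)

lemma set_tl_chain_aux_ext0_pos:
  "x \<in> set (tl (chain_aux \<alpha> \<tau> i n r)) \<Longrightarrow> 0 < ext0 \<alpha> \<tau> x i"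
proof (induction n arbitrary: r)
  case 0
  then show ?case by simp
next
  case (Suc n)
  define r' where "r' = next_row \<alpha> \<tau> i r"
  with Suc.prems have "r' \<noteq> 0" and "x \<in> set (chain_aux \<alpha> \<tau> i n r')"
    by (auto simp: Let_def split: if_splits)
  then have "x = r' \<or> x \<in> set (tl (chain_aux \<alpha> \<tau> i n r'))"
    by (metis chain_aux_neq_Nil hd_chain_aux list.collapse set_ConsD)
  with \<open>r' \<noteq> 0\<close> show ?case
    using Suc.IH next_row_ext0_pos unfolding r'_def by blast
qed

lemma dom_fold_map_upd:
  "dom (fold (\<lambda>(a, b) M. M((a, c) \<mapsto> v b)) xs M) = dom M \<union> (\<lambda>a. (a, c)) ` fst ` set xs"
  by (induction xs arbitrary: M) auto

lemma dom_tab_map [simp]: "dom (tab_map \<alpha> \<tau>) = diagram \<alpha>"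
  by (auto simp: tab_map_def split: if_splits)

lemma dom_phi:
  fixes i :: nat and \<alpha> :: "nat list" and \<tau> :: "nat \<Rightarrow> nat \<Rightarrow> nat"
  defines "D \<equiv> diagram \<alpha> - {(last_row \<alpha> i, i)}"
  shows "dom (phi i \<alpha> \<tau>) =
    (if \<exists>c. (last_row \<alpha> i, c) \<in> D then D
     else {(a, b). if a < last_row \<alpha> i then (a, b) \<in> D else (a + 1, b) \<in> D})"
proof -
  define rs where "rs = phi_chain \<alpha> \<tau> i"
  define M1 where "M1 = fold (\<lambda>(a, b) M. M((a, i) \<mapsto> ext0 \<alpha> \<tau> b i))
    (rev (zip (tl rs) rs)) (tab_map \<alpha> \<tau>)"
  define M where "M = M1((last_row \<alpha> i, i) := None)"
  have "hd (phi_chain \<alpha> \<tau> i) = last_row \<alpha> i"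
    by (simp add: phi_chain_def)
  then have phi_eq: "phi i \<alpha> \<tau> = (if \<exists>c. M (last_row \<alpha> i, c) \<noteq> None then M
      else (\<lambda>(r, c). if r < last_row \<alpha> i then M (r, c) else M (r + 1, c)))"
    unfolding phi_def M_def M1_def rs_def Let_def by (simp only:)
  have "fst ` set (rev (zip (tl rs) rs)) \<subseteq> set (tl rs)"
    by (auto dest: set_zip_leftD)
  moreover have "(x, i) \<in> diagram \<alpha>" if "x \<in> set (tl rs)" for x
    using that set_tl_chain_aux_ext0_pos ext0_pos_imp_in_diagram
    unfolding rs_def phi_chain_def by blast
  ultimately have "dom M1 = diagram \<alpha>"
    unfolding M1_def dom_fold_map_upd by auto
  then have "dom M = D"
    by (simp add: M_def D_def)
  then show ?thesis
    unfolding phi_eq by (auto simp: domIff split: if_splits)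
qed

lemma dom_phi_row_remains:
  assumes "(last_row \<alpha> i, c) \<in> diagram \<alpha>" and "c \<noteq> i"
  shows "dom (phi i \<alpha> \<tau>) = diagram \<alpha> - {(last_row \<alpha> i, i)}"
proof -
  from assms have "\<exists>c. (last_row \<alpha> i, c) \<in> diagram \<alpha> - {(last_row \<alpha> i, i)}"
    by blast
  then show ?thesis
    by (simp only: dom_phi if_True)
qed

lemma dom_phi_row_vanishes:
  assumes "\<And>c. (last_row \<alpha> i, c) \<in> diagram \<alpha> \<Longrightarrow> c = i"
  shows "dom (phi i \<alpha> \<tau>) =
    {(a, b). if a < last_row \<alpha> i then (a, b) \<in> diagram \<alpha> else (a + 1, b) \<in> diagram \<alpha>}"
proof -
  from assms have "\<nexists>c. (last_row \<alpha> i, c) \<in> diagram \<alpha> - {(last_row \<alpha> i, i)}"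
    by blast
  then show ?thesis
    unfolding dom_phi by (auto split: if_splits)
qed

lemma is_partition_shape_left:
  assumes "is_partition_shape S" and "(r, c) \<in> S" and "1 < c"
  shows "(r, c - 1) \<in> S"
  using assms unfolding is_partition_shape_def by fast

lemma addable_imp_mem:
  assumes "1 \<le> c" and "addable la (r, c + 1)"
  shows "c \<in> set la"
proof -
  have shape: "is_partition_shape (insert (r, c + 1) (diagram la))"
    using assms(2) by (simp add: addable_def)
  have "(r, c) \<in> insert (r, c + 1) (diagram la)"
    using is_partition_shape_left[OF shape insertI1] assms(1) by simp
  moreover have "(r, c + 1) \<notin> diagram la"
    using assms(2) by (simp add: addable_def)
  ultimately have "1 \<le> r" "r - 1 < length la" "la ! (r - 1) = c"
    by (auto simp: diagram_def)
  then show ?thesis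
    using nth_mem by metis
qed

lemma last_row_mem:
  assumes "i \<in> set \<alpha>"
  shows "1 \<le> last_row \<alpha> i" "last_row \<alpha> i \<le> length \<alpha>" "\<alpha> ! (last_row \<alpha> i - 1) = i"
proof -
  define Q where "Q = (\<lambda>r. 1 \<le> r \<and> r \<le> length \<alpha> \<and> \<alpha> ! (r - 1) = i)"
  have last_row_eq: "last_row \<alpha> i = Greatest Q"
    unfolding last_row_def Q_def ..
  from assms obtain k where "k < length \<alpha>" "\<alpha> ! k = i"
    by (metis in_set_conv_nth)
  then have "Q (Suc k)"
    by (simp add: Q_def)
  then have "Q (Greatest Q)"
    by (rule GreatestI_nat[where b = "length \<alpha>"]) (simp add: Q_def)
  then show "1 \<le> last_row \<alpha> i" "last_row \<alpha> i \<le> length \<alpha>" "\<alpha> ! (last_row \<alpha> i - 1) = i"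
    unfolding last_row_eq by (simp_all add: Q_def)
qed

lemma d_op_last_row:
  assumes "1 \<le> i" and "i \<in> set \<alpha>"
  shows "d_op i \<alpha> = (if i = 1 then take (last_row \<alpha> i - 1) \<alpha> @ drop (last_row \<alpha> i) \<alpha>
                      else \<alpha>[last_row \<alpha> i - 1 := i - 1])"
proof -
  have "\<exists>r. 1 \<le> r \<and> r \<le> length \<alpha> \<and> \<alpha> ! (r - 1) = i"
    using last_row_mem[OF \<open>i \<in> set \<alpha>\<close>] by blast
  with \<open>1 \<le> i\<close> show ?thesis
    unfolding d_op_def Let_def last_row_mem(3)[OF \<open>i \<in> set \<alpha>\<close>] by simp
qed

lemma diagram_list_update_remove_last_box:
  assumes "1 \<le> r" "r \<le> length \<alpha>" "\<alpha> ! (r - 1) = c"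
  shows "diagram (\<alpha>[r - 1 := c - 1]) = diagram \<alpha> - {(r, c)}"
  using assms by (auto simp: diagram_def nth_list_update split: if_splits)

lemma diagram_delete_row:
  assumes "1 \<le> r" "r \<le> length \<alpha>"
  shows "diagram (take (r - 1) \<alpha> @ drop r \<alpha>) =
    {(a, b). if a < r then (a, b) \<in> diagram \<alpha> else (a + 1, b) \<in> diagram \<alpha>}"
proof -
  define \<beta> where "\<beta> = take (r - 1) \<alpha> @ drop r \<alpha>"
  have length_\<beta>: "length \<beta> = length \<alpha> - 1"
    using assms by (simp add: \<beta>_def)
  have nth_\<beta>: "\<beta> ! j = (if j < r - 1 then \<alpha> ! j else \<alpha> ! Suc j)" if "j < length \<beta>" for j
    using assms that by (auto simp: \<beta>_def nth_append min_def)
  have "(a, b) \<in> diagram \<beta> \<longleftrightarrow> (if a < r then (a, b) \<in> diagram \<alpha> else (a + 1, b) \<in> diagram \<alpha>)"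
    for a b
  proof (cases "a < r")
    case True
    with assms show ?thesis
      by (auto simp: diagram_def length_\<beta> nth_\<beta> split: if_splits)
  next
    case False
    with assms have "\<not> a - 1 < r - 1" "Suc (a - 1) = a"
      by auto
    with assms False nth_\<beta>[of "a - 1"] show ?thesis
      by (auto simp: diagram_def length_\<beta>)
  qed
  then have "diagram \<beta> = {(a, b). if a < r then (a, b) \<in> diagram \<alpha> else (a + 1, b) \<in> diagram \<alpha>}"
    by blast
  then show ?thesis
    by (simp only: \<beta>_def)
qed

theorem lemma6p22:
  fixes i :: nat and \<alpha> :: "nat list" and \<tau> :: "nat \<Rightarrow> nat \<Rightarrow> nat"
  assumes "1 \<le> i"
    and "ssrct \<alpha> \<tau>"
    and "\<exists>r. addable (sort_dec \<alpha>) (r, i + 1)"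
  shows "dom (phi i \<alpha> \<tau>) = diagram (d_op i \<alpha>)"
proof -
  obtain r where "addable (sort_dec \<alpha>) (r, i + 1)"
    using assms(3) ..
  then have "i \<in> set (sort_dec \<alpha>)"
    by (rule addable_imp_mem[OF assms(1)])
  then have "i \<in> set \<alpha>"
    by (simp add: sort_dec_def)
  note r\<^sub>1 = last_row_mem[OF this]
  note d_op_eq = d_op_last_row[OF assms(1) \<open>i \<in> set \<alpha>\<close>]
  show ?thesis
  proof (cases "i = 1")
    case True
    have "c = i" if "(last_row \<alpha> i, c) \<in> diagram \<alpha>" for c
      using that r\<^sub>1(3) True by (simp add: diagram_def)
    then have "dom (phi i \<alpha> \<tau>) = {(a, b). if a < last_row \<alpha> i then (a, b) \<in> diagram \<alpha>
        else (a + 1, b) \<in> diagram \<alpha>}"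
      by (rule dom_phi_row_vanishes)
    also have "\<dots> = diagram (d_op i \<alpha>)"
      unfolding d_op_eq using True diagram_delete_row[OF r\<^sub>1(1,2)] by simp
    finally show ?thesis .
  next
    case False
    have "(last_row \<alpha> i, 1) \<in> diagram \<alpha>"
      using assms(1) r\<^sub>1 by (simp add: diagram_def)
    with False have "dom (phi i \<alpha> \<tau>) = diagram \<alpha> - {(last_row \<alpha> i, i)}"
      by (intro dom_phi_row_remains[of \<alpha> i 1]) auto
    also have "\<dots> = diagram (d_op i \<alpha>)"
      unfolding d_op_eq using False diagram_list_update_remove_last_box[OF r\<^sub>1] by simp
    finally show ?thesis .
  qed
qed

end
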